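(* Let $d,n\ge 1$, let $\boldsymbol{a}_1,\ldots,\boldsymbol{a}_n\in\mathbf{R}^d$, let $w_1,\ldots,w_n>0$, fix $\varepsilon>0$ and $0<p<1$. Define $\Phi(\boldsymbol{x})=\sum_{j=1}^n w_j\,(\lVert\boldsymbol{x}-\boldsymbol{a}_j\rVert^2+\varepsilon)^{p/2}$. Let $\boldsymbol{x}^{(0)}\in\mathbf{R}^d$ and define, for $t\ge 0$, $$\mu_j^{(t)}=w_j\,(\lVert\boldsymbol{x}^{(t)}-\boldsymbol{a}_j\rVert^2+\varepsilon)^{p/2-1},\qquad \boldsymbol{x}^{(t+1)}=\frac{\sum_j\mu_j^{(t)}\boldsymbol{a}_j}{\sum_j\mu_j^{(t)}}.$$ Assume that $(\boldsymbol{x}^{(t)})$ converges to a local minimizer $\boldsymbol{x}^\star$ of $\Phi$ and that the Hessian $\Phi''(\boldsymbol{x}^\star)$ is positive definite. Then $(\Phi(\boldsymbol{x}^{(t)}))$ converges linearly to $\Phi(\boldsymbol{x}^\star)$, i.e. there exist $\nu<1$ and $T\ge 0$ such that $\Phi(\boldsymbol{x}^{(t+1)})-\Phi(\boldsymbol{x}^\star)\le\nu\big(\Phi(\boldsymbol{x}^{(t)})-\Phi(\boldsymbol{x}^\star)\big)$ for all $t\ge T$.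
   Context: $\lVert\cdot\rVert$ is the Euclidean norm on $\mathbf{R}^d$; $\Phi''$ denotes the Hessian matrix of the smooth function $\Phi$. *)

theory Defs
  imports "HOL-Analysis.Analysis"
begin

definition local_minimizer :: "('a::real_normed_vector \<Rightarrow> real) \<Rightarrow> 'a \<Rightarrow> bool" where
  "local_minimizer f x \<longleftrightarrow> (\<exists>\<delta>>0. \<forall>y. dist y x < \<delta> \<longrightarrow> f x \<le> f y)"

text \<open>Here g is the
  gradient of f (f differentiable everywhere, with derivative h \<mapsto> g y \<bullet> h), and H is
  the Frechet derivative of g at x, i.e. the Hessian f''(x) as a linear map.\<close>
definition hessian_pos_def :: "('a::euclidean_space \<Rightarrow> real) \<Rightarrow> 'a \<Rightarrow> bool" where
  "hessian_pos_def f x \<longleftrightarrow>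
     (\<exists>g H. (\<forall>y. (f has_derivative (\<lambda>h. g y \<bullet> h)) (at y)) \<and>
            (g has_derivative H) (at x) \<and>
            (\<forall>v. v \<noteq> 0 \<longrightarrow> v \<bullet> H v > 0))"

end

theory Submission
  imports Defs
begin

text \<open>
  By concavity of \<open>u \<mapsto> u powr (p/2)\<close>, the next iterate \<open>T y\<close> minimises the quadratic majorant
  \<open>\<Phi>(y) + p/2 * M(y) * (\<parallel>z - T y\<parallel>\<^sup>2 - \<parallel>y - T y\<parallel>\<^sup>2)\<close> of \<open>\<Phi>\<close> at \<open>y\<close>, where \<open>T\<close> is the
  iteration map and \<open>M(y) = \<Sum>j \<mu>\<^sub>j(y)\<close>.  Taking \<open>z = T y\<close> gives the sufficient decrease
  \<open>\<Phi>(T y) \<le> \<Phi>(y) - p/2 * M(y) * \<parallel>y - T y\<parallel>\<^sup>2\<close>; taking \<open>y = x\<^sup>\<star>\<close> (a fixed point of \<open>T\<close>) gives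
  \<open>\<Phi>(z) - \<Phi>(x\<^sup>\<star>) \<le> p/2 * M(x\<^sup>\<star>) * \<parallel>z - x\<^sup>\<star>\<parallel>\<^sup>2\<close>.  The gradient of \<open>\<Phi>\<close> is \<open>p * M(y) * (y - T y)\<close>,
  and a positive definite Hessian makes it at least \<open>c * \<parallel>y - x\<^sup>\<star>\<parallel>\<close> near \<open>x\<^sup>\<star>\<close>.  Since \<open>M\<close> is
  bounded, the decrease \<open>\<parallel>y - T y\<parallel>\<^sup>2\<close> thus dominates \<open>\<parallel>y - x\<^sup>\<star>\<parallel>\<^sup>2\<close>, which dominates the gap
  \<open>\<Phi>(y) - \<Phi>(x\<^sup>\<star>)\<close>.
\<close>

lemma powr_le_tangent:
  fixes u u0 q :: real
  assumes "0 < u" "0 < u0" "0 \<le> q" "q \<le> 1"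
  shows "u powr q \<le> u0 powr q + q * u0 powr (q - 1) * (u - u0)"
proof -
  have young: "u powr q * u0 powr (1 - q) \<le> q * u + (1 - q) * u0"
    using Youngs_inequality_0[of q "1 - q" u u0] assms by simp
  have "u powr q = (u powr q * u0 powr (1 - q)) * u0 powr (q - 1)"
    using assms by (simp add: mult.assoc powr_add[symmetric])
  also have "\<dots> \<le> (q * u + (1 - q) * u0) * u0 powr (q - 1)"
    using young assms by (simp add: mult_right_mono)
  also have "\<dots> = u0 powr q + q * u0 powr (q - 1) * (u - u0)"
    using powr_add[of u0 "q - 1" 1] assms by (simp add: algebra_simps)
  finally show ?thesis .
qed

lemma has_derivative_sq_dist_add_powr:
  fixes a :: "'a::real_inner" and \<epsilon> q :: real
  assumes "\<epsilon> > 0"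
  shows "((\<lambda>y. ((norm (y - a))\<^sup>2 + \<epsilon>) powr q) has_derivative
     (\<lambda>h. (2 * q * ((norm (y - a))\<^sup>2 + \<epsilon>) powr (q - 1)) * ((y - a) \<bullet> h))) (at y)"
proof -
  have pos: "0 < (y - a) \<bullet> (y - a) + \<epsilon>"
    using assms by (simp add: add_nonneg_pos)
  have "((\<lambda>y. ((y - a) \<bullet> (y - a) + \<epsilon>) powr q) has_derivative
     (\<lambda>h. (2 * q * ((y - a) \<bullet> (y - a) + \<epsilon>) powr (q - 1)) * ((y - a) \<bullet> h))) (at y)"
    by (rule derivative_eq_intros refl pos | simp)+
      (use pos in \<open>auto simp: powr_diff inner_commute field_simps\<close>)
  then show ?thesis
    by (simp add: power2_norm_eq_inner)
qed

lemma weighted_sq_dist_diff_eq: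
  fixes a :: "'i \<Rightarrow> 'a::real_inner"
  assumes "(\<Sum>j\<in>I. c j *\<^sub>R a j) = (\<Sum>j\<in>I. c j) *\<^sub>R m"
  shows "(\<Sum>j\<in>I. c j * ((norm (z - a j))\<^sup>2 - (norm (y - a j))\<^sup>2))
       = (\<Sum>j\<in>I. c j) * ((norm (z - m))\<^sup>2 - (norm (y - m))\<^sup>2)"
proof -
  have "(norm (z - a j))\<^sup>2 - (norm (y - a j))\<^sup>2 = (norm z)\<^sup>2 - (norm y)\<^sup>2 - 2 * (a j \<bullet> (z - y))"
    for j
    by (simp add: power2_norm_eq_inner inner_diff_left inner_diff_right inner_commute)
  then have "(\<Sum>j\<in>I. c j * ((norm (z - a j))\<^sup>2 - (norm (y - a j))\<^sup>2))
      = (\<Sum>j\<in>I. c j) * ((norm z)\<^sup>2 - (norm y)\<^sup>2) - 2 * ((\<Sum>j\<in>I. c j *\<^sub>R a j) \<bullet> (z - y))"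
    by (simp add: right_diff_distrib sum_subtractf sum_distrib_left sum_distrib_right
        inner_sum_left mult.left_commute)
  also have "\<dots> = (\<Sum>j\<in>I. c j) * ((norm (z - m))\<^sup>2 - (norm (y - m))\<^sup>2)"
    unfolding assms
    by (simp add: power2_norm_eq_inner inner_diff_left inner_diff_right inner_commute
        algebra_simps)
  finally show ?thesis .
qed

lemma pos_def_linear_coercive:
  fixes H :: "'a::euclidean_space \<Rightarrow> 'a"
  assumes lin: "bounded_linear H" and pos: "\<And>v. v \<noteq> 0 \<Longrightarrow> v \<bullet> H v > 0"
  obtains c where "c > 0" "\<And>v. c * norm v \<le> norm (H v)"
proof -
  have "continuous_on (sphere 0 1) (\<lambda>v. v \<bullet> H v)"
    using linear_continuous_on[OF lin] by (intro continuous_on_inner continuous_on_id)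
  then obtain u where u: "u \<in> sphere (0::'a) 1" and u_min: "\<And>v. v \<in> sphere 0 1 \<Longrightarrow> u \<bullet> H u \<le> v \<bullet> H v"
    using continuous_attains_inf[of "sphere (0::'a) 1" "\<lambda>v. v \<bullet> H v"] by auto
  have "u \<bullet> H u > 0"
    using u pos[of u] by fastforce
  moreover have "(u \<bullet> H u) * norm v \<le> norm (H v)" for v
  proof (cases "v = 0")
    case True
    then show ?thesis using lin by (simp add: linear_simps)
  next
    case False
    have "H (v /\<^sub>R norm v) = H v /\<^sub>R norm v"
      using linear_cmul[OF bounded_linear.linear[OF lin]] by simp
    then have "u \<bullet> H u \<le> (v \<bullet> H v) / (norm v)\<^sup>2"
      using u_min[of "v /\<^sub>R norm v"] False by (simp add: power2_eq_square divide_inverse mult_ac)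
    then have "(u \<bullet> H u) * (norm v)\<^sup>2 \<le> norm v * norm (H v)"
      using norm_cauchy_schwarz[of v "H v"] False by (simp add: field_simps)
    then show ?thesis
      using False by (simp add: power2_eq_square)
  qed
  ultimately show ?thesis using that by blast
qed

lemma has_derivative_pos_def_lower_bound:
  fixes g :: "'a::euclidean_space \<Rightarrow> 'a"
  assumes g: "(g has_derivative H) (at x)" and pos: "\<And>v. v \<noteq> 0 \<Longrightarrow> v \<bullet> H v > 0"
  obtains c d where "c > 0" "d > 0" "\<And>y. norm (y - x) < d \<Longrightarrow> c * norm (y - x) \<le> norm (g y - g x)"
proof -
  obtain c where c: "c > 0" and H: "\<And>v. c * norm v \<le> norm (H v)"
    using pos_def_linear_coercive[OF has_derivative_bounded_linear[OF g] pos] by blast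
  obtain d where d: "d > 0"
    and approx: "\<And>y. norm (y - x) < d \<Longrightarrow> norm (g y - g x - H (y - x)) \<le> c/2 * norm (y - x)"
    using g c unfolding has_derivative_at_alt by (meson half_gt_zero)
  have "c/2 * norm (y - x) \<le> norm (g y - g x)" if "norm (y - x) < d" for y
    using H[of "y - x"] approx[OF that] norm_triangle_ineq2[of "H (y - x)" "g y - g x"]
    by (simp add: norm_minus_commute)
  then show ?thesis
    using that[of "c/2" d] c d by simp
qed

lemma gradient_unique:
  assumes "(f has_derivative (\<lambda>h. u \<bullet> h)) (at x)" "(f has_derivative (\<lambda>h. v \<bullet> h)) (at x)"
  shows "u = v"
  using has_derivative_unique[OF assms] vector_eq_rdot by metis

locale smoothed_weiszfeld =
  fixes n :: nat and a :: "nat \<Rightarrow> 'a::euclidean_space" and w :: "nat \<Rightarrow> real" and \<epsilon> p :: real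
  assumes n_pos: "n \<ge> 1" and w_pos: "\<And>j. j < n \<Longrightarrow> w j > 0"
    and \<epsilon>_pos: "\<epsilon> > 0" and p_pos: "0 < p" and p_less_1: "p < 1"
begin

definition objective :: "'a \<Rightarrow> real" where
  "objective y = (\<Sum>j<n. w j * ((norm (y - a j))\<^sup>2 + \<epsilon>) powr (p / 2))"

definition weight :: "'a \<Rightarrow> nat \<Rightarrow> real" where
  "weight y j = w j * ((norm (y - a j))\<^sup>2 + \<epsilon>) powr (p / 2 - 1)"

definition total_weight :: "'a \<Rightarrow> real" where
  "total_weight y = (\<Sum>j<n. weight y j)"

definition step :: "'a \<Rightarrow> 'a" where
  "step y = (\<Sum>j<n. weight y j *\<^sub>R a j) /\<^sub>R total_weight y"

definition max_total_weight :: real where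
  "max_total_weight = (\<Sum>j<n. w j * \<epsilon> powr (p / 2 - 1))"

lemma sq_dist_add_eps_pos: "(norm (y - a j))\<^sup>2 + \<epsilon> > 0"
  using \<epsilon>_pos by (simp add: add_nonneg_pos)

lemma weight_pos:
  assumes "j < n" shows "weight y j > 0"
  unfolding weight_def using w_pos[OF assms] sq_dist_add_eps_pos[of y j] by (intro mult_pos_pos) auto

lemma total_weight_pos: "total_weight y > 0"
  unfolding total_weight_def using weight_pos n_pos
  by (intro sum_pos) (auto simp: lessThan_empty_iff)

lemma total_weight_le_max: "total_weight y \<le> max_total_weight"
  unfolding total_weight_def max_total_weight_def weight_def
  using w_pos \<epsilon>_pos p_less_1
  by (intro sum_mono mult_left_mono powr_mono2') (auto simp: less_imp_le)

lemma weighted_sum_eq_step: "(\<Sum>j<n. weight y j *\<^sub>R a j) = total_weight y *\<^sub>R step y"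
  unfolding step_def using total_weight_pos[of y] by simp

lemma isCont_step: "isCont step y"
  unfolding step_def total_weight_def weight_def
  using total_weight_pos[of y] sq_dist_add_eps_pos[THEN less_imp_neq, THEN not_sym]
  by (intro continuous_intros) (auto simp: total_weight_def weight_def)

lemma objective_le_linearization:
  "objective z \<le> objective y + p/2 * (\<Sum>j<n. weight y j * ((norm (z - a j))\<^sup>2 - (norm (y - a j))\<^sup>2))"
proof -
  have "w j * ((norm (z - a j))\<^sup>2 + \<epsilon>) powr (p / 2)
      \<le> w j * ((norm (y - a j))\<^sup>2 + \<epsilon>) powr (p / 2)
        + p/2 * (weight y j * ((norm (z - a j))\<^sup>2 - (norm (y - a j))\<^sup>2))" if "j < n" for j
  proof -
    have "w j * ((norm (z - a j))\<^sup>2 + \<epsilon>) powr (p / 2)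
        \<le> w j * (((norm (y - a j))\<^sup>2 + \<epsilon>) powr (p / 2) + p/2 * ((norm (y - a j))\<^sup>2 + \<epsilon>) powr (p/2 - 1)
             * (((norm (z - a j))\<^sup>2 + \<epsilon>) - ((norm (y - a j))\<^sup>2 + \<epsilon>)))"
      using w_pos[OF that] p_pos p_less_1
      by (intro mult_left_mono powr_le_tangent sq_dist_add_eps_pos) auto
    then show ?thesis
      by (simp add: weight_def algebra_simps diff_divide_distrib)
  qed
  then have "objective z \<le> (\<Sum>j<n. w j * ((norm (y - a j))\<^sup>2 + \<epsilon>) powr (p / 2)
      + p/2 * (weight y j * ((norm (z - a j))\<^sup>2 - (norm (y - a j))\<^sup>2)))"
    unfolding objective_def by (intro sum_mono) auto
  then show ?thesis
    by (simp add: objective_def sum.distrib sum_distrib_left)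
qed

lemma objective_le_majorant:
  "objective z \<le> objective y
     + p/2 * total_weight y * ((norm (z - step y))\<^sup>2 - (norm (y - step y))\<^sup>2)"
  using objective_le_linearization[of z y]
    weighted_sq_dist_diff_eq[OF weighted_sum_eq_step[unfolded total_weight_def]]
  by (simp add: total_weight_def)

lemma objective_step_decrease:
  "objective (step y) \<le> objective y - p/2 * total_weight y * (norm (y - step y))\<^sup>2"
  using objective_le_majorant[of "step y" y] by simp

lemma objective_gap_at_fixed_point:
  assumes "step xs = xs"
  shows "objective z - objective xs \<le> p/2 * total_weight xs * (norm (z - xs))\<^sup>2"
  using objective_le_majorant[of z xs] assms by simp

lemma has_derivative_objective:
  "(objective has_derivative (\<lambda>h. ((p * total_weight y) *\<^sub>R (y - step y)) \<bullet> h)) (at y)"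
proof -
  have "(objective has_derivative
      (\<lambda>h. \<Sum>j<n. w j * ((2 * (p/2) * ((norm (y - a j))\<^sup>2 + \<epsilon>) powr (p/2 - 1)) * ((y - a j) \<bullet> h)))) (at y)"
    unfolding objective_def
    by (intro has_derivative_sum has_derivative_mult_right has_derivative_sq_dist_add_powr \<epsilon>_pos)
  moreover have "(\<Sum>j<n. w j * ((2 * (p/2) * ((norm (y - a j))\<^sup>2 + \<epsilon>) powr (p/2 - 1)) * ((y - a j) \<bullet> h)))
      = ((p * total_weight y) *\<^sub>R (y - step y)) \<bullet> h" for h
  proof -
    have "total_weight y *\<^sub>R (y - step y) = (\<Sum>j<n. weight y j *\<^sub>R (y - a j))"
      using weighted_sum_eq_step[of y]
      by (simp add: scaleR_diff_right sum_subtractf scaleR_sum_left total_weight_def)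
    then have "((p * total_weight y) *\<^sub>R (y - step y)) \<bullet> h
        = p * (\<Sum>j<n. weight y j * ((y - a j) \<bullet> h))"
      by (simp add: inner_sum_left flip: scaleR_scaleR)
    then show ?thesis
      by (simp add: weight_def sum_distrib_left mult_ac)
  qed
  ultimately show ?thesis by simp
qed

lemma step_residual_lower_bound:
  assumes fixed: "step xs = xs" and "hessian_pos_def objective xs"
  obtains c d where "c > 0" "d > 0"
    "\<And>y. norm (y - xs) < d \<Longrightarrow> c * norm (y - xs) \<le> total_weight y * norm (y - step y)"
proof -
  from \<open>hessian_pos_def objective xs\<close> obtain g H
    where g: "\<And>y. (objective has_derivative (\<lambda>h. g y \<bullet> h)) (at y)"
      and gH: "(g has_derivative H) (at xs)" and H: "\<And>v. v \<noteq> 0 \<Longrightarrow> v \<bullet> H v > 0"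
    unfolding hessian_pos_def_def by blast
  have g_eq: "g y = (p * total_weight y) *\<^sub>R (y - step y)" for y
    using gradient_unique[OF g has_derivative_objective] .
  obtain c d where "c > 0" "d > 0"
    and lower: "\<And>y. norm (y - xs) < d \<Longrightarrow> c * norm (y - xs) \<le> norm (g y - g xs)"
    using has_derivative_pos_def_lower_bound[OF gH H] by blast
  have "c / p * norm (y - xs) \<le> total_weight y * norm (y - step y)" if "norm (y - xs) < d" for y
  proof -
    have "norm (g y - g xs) = p * (total_weight y * norm (y - step y))"
      using p_pos total_weight_pos[of y] by (simp add: g_eq fixed flip: scaleR_diff_right)
    then show ?thesis
      using lower[OF that] p_pos by (simp add: field_simps)
  qed
  then show ?thesis
    using that[of "c / p" d] \<open>c > 0\<close> \<open>d > 0\<close> p_pos by simp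
qed

lemma objective_contraction_near_fixed_point:
  assumes fixed: "step xs = xs" and "c > 0"
    and grad: "\<And>y. norm (y - xs) < d \<Longrightarrow> c * norm (y - xs) \<le> total_weight y * norm (y - step y)"
  obtains \<nu> where "\<nu> < 1"
    "\<And>y. norm (y - xs) < d \<Longrightarrow> objective (step y) - objective xs \<le> \<nu> * (objective y - objective xs)"
proof -
  define \<kappa> where "\<kappa> = c\<^sup>2 / (total_weight xs * max_total_weight)"
  have max_pos: "max_total_weight > 0"
    using total_weight_le_max[of xs] total_weight_pos[of xs] by linarith
  have "\<kappa> > 0"
    unfolding \<kappa>_def using \<open>c > 0\<close> p_pos total_weight_pos max_pos by simp
  moreover have "objective (step y) - objective xs \<le> (1 - \<kappa>) * (objective y - objective xs)"
    if y: "norm (y - xs) < d" for y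
  proof -
    define r where "r = norm (y - xs)"
    define D where "D = norm (y - step y)"
    define m where "m = total_weight y"
    have m: "0 < m" "m \<le> max_total_weight"
      unfolding m_def using total_weight_pos total_weight_le_max by auto
    have "(c * r)\<^sup>2 \<le> (m * D)\<^sup>2"
      using grad[OF y] \<open>c > 0\<close> by (intro power_mono) (auto simp: r_def m_def D_def)
    then have "(c * r)\<^sup>2 / max_total_weight \<le> (m * D)\<^sup>2 / m"
      using m by (intro frac_le) auto
    also have "\<dots> = m * D\<^sup>2"
      using m by (simp add: power2_eq_square)
    finally have "p/2 * ((c * r)\<^sup>2 / max_total_weight) \<le> p/2 * (m * D\<^sup>2)"
      using p_pos by (intro mult_left_mono) auto
    moreover have "\<kappa> * (objective y - objective xs) \<le> \<kappa> * (p/2 * total_weight xs * r\<^sup>2)"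
      using objective_gap_at_fixed_point[OF fixed, of y] \<open>\<kappa> > 0\<close> unfolding r_def
      by (intro mult_left_mono) auto
    moreover have "\<kappa> * (p/2 * total_weight xs * r\<^sup>2) = p/2 * ((c * r)\<^sup>2 / max_total_weight)"
      unfolding \<kappa>_def using total_weight_pos[of xs] by (simp add: power2_eq_square mult_ac)
    ultimately have "\<kappa> * (objective y - objective xs) \<le> p/2 * (m * D\<^sup>2)"
      by linarith
    then show ?thesis
      using objective_step_decrease[of y] unfolding m_def D_def by (simp add: algebra_simps)
  qed
  ultimately show ?thesis
    using that[of "1 - \<kappa>"] by simp
qed

end

theorem proposition7:
  fixes n :: nat and a :: "nat \<Rightarrow> 'a::euclidean_space" and w :: "nat \<Rightarrow> real"
    and \<epsilon> p :: real and \<Phi> :: "'a \<Rightarrow> real" and x :: "nat \<Rightarrow> 'a" and xs :: 'a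
  assumes "n \<ge> 1"
    and "\<And>j. j < n \<Longrightarrow> w j > 0"
    and "\<epsilon> > 0" and "0 < p" and "p < 1"
    and \<Phi>_def: "\<And>y. \<Phi> y = (\<Sum>j<n. w j * ((norm (y - a j))\<^sup>2 + \<epsilon>) powr (p / 2))"
    and step: "\<And>t. x (Suc t) =
       (\<Sum>j<n. (w j * ((norm (x t - a j))\<^sup>2 + \<epsilon>) powr (p / 2 - 1)) *\<^sub>R a j) /\<^sub>R
       (\<Sum>j<n. w j * ((norm (x t - a j))\<^sup>2 + \<epsilon>) powr (p / 2 - 1))"
    and "x \<longlonglongrightarrow> xs"
    and "local_minimizer \<Phi> xs"
    and "hessian_pos_def \<Phi> xs"
  shows "\<exists>\<nu> < 1. \<exists>T. \<forall>t\<ge>T. \<Phi> (x (Suc t)) - \<Phi> xs \<le> \<nu> * (\<Phi> (x t) - \<Phi> xs)"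
proof -
  interpret smoothed_weiszfeld n a w \<epsilon> p
    using assms(1-5) by unfold_locales
  have \<Phi>_eq: "\<Phi> = objective"
    using \<Phi>_def by (simp add: fun_eq_iff objective_def)
  have x_Suc: "x (Suc t) = step (x t)" for t
    using step by (simp add: step_def total_weight_def weight_def)
  \<comment> \<open>Convergence alone makes \<open>xs\<close> a fixed point.\<close>
  have "(\<lambda>t. step (x t)) \<longlonglongrightarrow> xs"
    using LIMSEQ_Suc[OF \<open>x \<longlonglongrightarrow> xs\<close>] by (simp add: x_Suc)
  then have fixed: "step xs = xs"
    using LIMSEQ_unique isCont_tendsto_compose[OF isCont_step \<open>x \<longlonglongrightarrow> xs\<close>] by blast
  obtain c d where "c > 0" "d > 0"
    and "\<And>y. norm (y - xs) < d \<Longrightarrow> c * norm (y - xs) \<le> total_weight y * norm (y - step y)"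
    using step_residual_lower_bound[OF fixed] \<open>hessian_pos_def \<Phi> xs\<close> \<Phi>_eq by blast
  then obtain \<nu> where "\<nu> < 1" and contraction:
      "\<And>y. norm (y - xs) < d \<Longrightarrow> objective (step y) - objective xs \<le> \<nu> * (objective y - objective xs)"
    using objective_contraction_near_fixed_point[OF fixed] by blast
  obtain T where "\<forall>t\<ge>T. norm (x t - xs) < d"
    using \<open>x \<longlonglongrightarrow> xs\<close> \<open>d > 0\<close> unfolding LIMSEQ_iff by blast
  then show ?thesis
    using \<open>\<nu> < 1\<close> contraction by (auto simp: \<Phi>_eq x_Suc)
qed

end
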